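(* Let $\mathbb{K}$ be a class of frames definable in $\mathbf{K}$. Then $\mathbb{K}$ is definable in $\mathbf{K}\mathsf{biG}$ and $\mathbf{K}\mathsf{G}^2$.
   Context: A set of formulas $\Sigma$ defines a class of frames $\mathbb{K}$ in a logic $\mathbf{L}$ iff $\mathfrak{F}\in\mathbb{K}$ exactly when $\mathfrak{F}\models_\mathbf{L}\Sigma$. $\mathbf{K}$ is classical modal logic. $\mathbf{K}\mathsf{biG}$ is modal bi-Gödel logic on crisp frames: language over $\wedge,\vee,\rightarrow,\ominus$ (Gödel coimplication, $b\ominus_\mathsf{G}a=0$ if $b\le a$, else $b$), $\Box,\lozenge$, a single valuation into $[0,1]$ with Gödel operations ($\min$, $\max$, $a\rightarrow_\mathsf{G}b=1$ if $a\le b$ else $b$), $\Box$ as infimum and $\lozenge$ as supremum over $R$-successors, validity meaning value $1$ everywhere. $\mathbf{K}\mathsf{G}^2$ is its extension by a De Morgan negation $\neg$, interpreted on crisp frames with two valuations $v_1,v_2$ (support of truth/falsity) swapped by $\neg$, validity meaning $v_1=1$ and $v_2=0$ everywhere. $\mathbf{K}$ faithfully embeds into $\mathfrak{GK}^c$ (crisp modal Gödel logic) via $p\mapsto{\sim\sim}p$, where ${\sim}\phi:=\phi\rightarrow\mathbf{0}$; and $\mathbf{K}\mathsf{biG}$, $\mathbf{K}\mathsf{G}^2$ are conservative over $\mathfrak{GK}^c$ on crisp frames. *)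

theory Defs
  imports Complex_Main
begin

type_synonym 'w frame = "'w set \<times> ('w \<Rightarrow> 'w \<Rightarrow> bool)"

definition is_frame :: "'w frame \<Rightarrow> bool" where
  "is_frame F \<longleftrightarrow> fst F \<noteq> {} \<and> (\<forall>x y. snd F x y \<longrightarrow> x \<in> fst F \<and> y \<in> fst F)"

definition succs :: "'w frame \<Rightarrow> 'w \<Rightarrow> 'w set" where
  "succs F w = {u \<in> fst F. snd F w u}"

datatype kfm = KVar nat | KBot | KAnd kfm kfm | KOr kfm kfm | KImp kfm kfm
  | KBox kfm | KDia kfm

fun ksat :: "'w frame \<Rightarrow> (nat \<Rightarrow> 'w set) \<Rightarrow> 'w \<Rightarrow> kfm \<Rightarrow> bool" where
  "ksat F V w (KVar p) = (w \<in> V p)"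
| "ksat F V w KBot = False"
| "ksat F V w (KAnd a b) = (ksat F V w a \<and> ksat F V w b)"
| "ksat F V w (KOr a b) = (ksat F V w a \<or> ksat F V w b)"
| "ksat F V w (KImp a b) = (ksat F V w a \<longrightarrow> ksat F V w b)"
| "ksat F V w (KBox a) = (\<forall>u \<in> succs F w. ksat F V u a)"
| "ksat F V w (KDia a) = (\<exists>u \<in> succs F w. ksat F V u a)"

definition k_valid :: "'w frame \<Rightarrow> kfm set \<Rightarrow> bool" where
  "k_valid F \<Sigma> \<longleftrightarrow> (\<forall>V. \<forall>w \<in> fst F. \<forall>\<phi> \<in> \<Sigma>. ksat F V w \<phi>)"

definition gimp :: "real \<Rightarrow> real \<Rightarrow> real" where
  "gimp a b = (if a \<le> b then 1 else b)"

definition gcoimp :: "real \<Rightarrow> real \<Rightarrow> real" where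
  "gcoimp b a = (if b \<le> a then 0 else b)"

definition infU :: "real set \<Rightarrow> real" where
  "infU S = (if S = {} then 1 else Inf S)"

definition supU :: "real set \<Rightarrow> real" where
  "supU S = (if S = {} then 0 else Sup S)"

text \<open>One datatype for both languages; KbiG formulas are those without GNeg.\<close>
datatype gfm = GVar nat | GZero | GOne | GAnd gfm gfm | GOr gfm gfm
  | GImp gfm gfm | GCoimp gfm gfm | GBox gfm | GDia gfm | GNeg gfm

fun neg_free :: "gfm \<Rightarrow> bool" where
  "neg_free (GVar p) = True"
| "neg_free GZero = True"
| "neg_free GOne = True"
| "neg_free (GAnd a b) = (neg_free a \<and> neg_free b)"
| "neg_free (GOr a b) = (neg_free a \<and> neg_free b)"
| "neg_free (GImp a b) = (neg_free a \<and> neg_free b)"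
| "neg_free (GCoimp a b) = (neg_free a \<and> neg_free b)"
| "neg_free (GBox a) = neg_free a"
| "neg_free (GDia a) = neg_free a"
| "neg_free (GNeg a) = False"

fun bival :: "'w frame \<Rightarrow> (nat \<Rightarrow> 'w \<Rightarrow> real) \<Rightarrow> 'w \<Rightarrow> gfm \<Rightarrow> real" where
  "bival F v w (GVar p) = v p w"
| "bival F v w GZero = 0"
| "bival F v w GOne = 1"
| "bival F v w (GAnd a b) = min (bival F v w a) (bival F v w b)"
| "bival F v w (GOr a b) = max (bival F v w a) (bival F v w b)"
| "bival F v w (GImp a b) = gimp (bival F v w a) (bival F v w b)"
| "bival F v w (GCoimp a b) = gcoimp (bival F v w a) (bival F v w b)"
| "bival F v w (GBox a) = infU ((\<lambda>u. bival F v u a) ` succs F w)"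
| "bival F v w (GDia a) = supU ((\<lambda>u. bival F v u a) ` succs F w)"
| "bival F v w (GNeg a) = 0" \<comment> \<open>not in the KbiG language; never used\<close>

definition unit_val :: "'w frame \<Rightarrow> (nat \<Rightarrow> 'w \<Rightarrow> real) \<Rightarrow> bool" where
  "unit_val F v \<longleftrightarrow> (\<forall>p. \<forall>w \<in> fst F. 0 \<le> v p w \<and> v p w \<le> 1)"

definition biG_valid :: "'w frame \<Rightarrow> gfm set \<Rightarrow> bool" where
  "biG_valid F \<Sigma> \<longleftrightarrow>
     (\<forall>v. unit_val F v \<longrightarrow> (\<forall>w \<in> fst F. \<forall>\<phi> \<in> \<Sigma>. bival F v w \<phi> = 1))"

text \<open>KG2 semantics: two valuations (support of truth, support of falsity),
computed simultaneously as a pair (v1, v2).\<close>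
fun g2val :: "'w frame \<Rightarrow> (nat \<Rightarrow> 'w \<Rightarrow> real) \<Rightarrow> (nat \<Rightarrow> 'w \<Rightarrow> real) \<Rightarrow> 'w
               \<Rightarrow> gfm \<Rightarrow> real \<times> real" where
  "g2val F v1 v2 w (GVar p) = (v1 p w, v2 p w)"
| "g2val F v1 v2 w GZero = (0, 1)"
| "g2val F v1 v2 w GOne = (1, 0)"
| "g2val F v1 v2 w (GNeg a) = (snd (g2val F v1 v2 w a), fst (g2val F v1 v2 w a))"
| "g2val F v1 v2 w (GAnd a b) =
     (min (fst (g2val F v1 v2 w a)) (fst (g2val F v1 v2 w b)),
      max (snd (g2val F v1 v2 w a)) (snd (g2val F v1 v2 w b)))"
| "g2val F v1 v2 w (GOr a b) =
     (max (fst (g2val F v1 v2 w a)) (fst (g2val F v1 v2 w b)),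
      min (snd (g2val F v1 v2 w a)) (snd (g2val F v1 v2 w b)))"
| "g2val F v1 v2 w (GImp a b) =
     (gimp (fst (g2val F v1 v2 w a)) (fst (g2val F v1 v2 w b)),
      gcoimp (snd (g2val F v1 v2 w b)) (snd (g2val F v1 v2 w a)))"
| "g2val F v1 v2 w (GCoimp a b) =
     (gcoimp (fst (g2val F v1 v2 w a)) (fst (g2val F v1 v2 w b)),
      gimp (snd (g2val F v1 v2 w b)) (snd (g2val F v1 v2 w a)))"
| "g2val F v1 v2 w (GBox a) =
     (infU ((\<lambda>u. fst (g2val F v1 v2 u a)) ` succs F w),
      supU ((\<lambda>u. snd (g2val F v1 v2 u a)) ` succs F w))"
| "g2val F v1 v2 w (GDia a) =
     (supU ((\<lambda>u. fst (g2val F v1 v2 u a)) ` succs F w),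
      infU ((\<lambda>u. snd (g2val F v1 v2 u a)) ` succs F w))"

definition G2_valid :: "'w frame \<Rightarrow> gfm set \<Rightarrow> bool" where
  "G2_valid F \<Sigma> \<longleftrightarrow>
     (\<forall>v1 v2. unit_val F v1 \<longrightarrow> unit_val F v2 \<longrightarrow>
        (\<forall>w \<in> fst F. \<forall>\<phi> \<in> \<Sigma>. g2val F v1 v2 w \<phi> = (1, 0)))"

definition K_defines :: "kfm set \<Rightarrow> 'w frame set \<Rightarrow> bool" where
  "K_defines \<Sigma> \<KK> \<longleftrightarrow> (\<forall>F. is_frame F \<longrightarrow> (F \<in> \<KK> \<longleftrightarrow> k_valid F \<Sigma>))"

definition biG_defines :: "gfm set \<Rightarrow> 'w frame set \<Rightarrow> bool" where
  "biG_defines \<Sigma> \<KK> \<longleftrightarrow> (\<forall>\<phi> \<in> \<Sigma>. neg_free \<phi>) \<and>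
     (\<forall>F. is_frame F \<longrightarrow> (F \<in> \<KK> \<longleftrightarrow> biG_valid F \<Sigma>))"

definition G2_defines :: "gfm set \<Rightarrow> 'w frame set \<Rightarrow> bool" where
  "G2_defines \<Sigma> \<KK> \<longleftrightarrow> (\<forall>F. is_frame F \<longrightarrow> (F \<in> \<KK> \<longleftrightarrow> G2_valid F \<Sigma>))"

end

theory Submission
  imports Defs
begin

text \<open>Substitute for every variable p a formula whose value is always crisp: ~~p in KbiG,
  which has value 1 where v(p) > 0 and 0 elsewhere, and ~~p & ~(neg ~~p) in KG2, which has
  value (1, 0) where v1(p) > 0 and v2(p) < 1 and (0, 1) elsewhere. On crisp values the Goedel
  connectives and the infima/suprema of the modalities behave classically, so the substituted
  formula takes the designated value exactly where the original one holds in the classical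
  model whose valuation is read off from those crisp values. Every classical valuation arises
  this way (from its indicator function), so a set of K-formulas and its substitution instance
  are valid on the same frames.\<close>

lemma infU_of_bool_image: "infU ((\<lambda>u. of_bool (P u)) ` S) = (of_bool (\<forall>u\<in>S. P u) :: real)"
proof (cases "\<forall>u\<in>S. P u")
  case True
  then have "(\<lambda>u. of_bool (P u) :: real) ` S \<subseteq> {1}" by auto
  then show ?thesis using True by (auto simp: infU_def subset_singleton_iff)
next
  case False
  then have "0 \<in> (\<lambda>u. of_bool (P u) :: real) ` S" by force
  moreover have "(\<lambda>u. of_bool (P u) :: real) ` S \<subseteq> {0, 1}" by auto
  ultimately have "Inf ((\<lambda>u. of_bool (P u) :: real) ` S) = 0"
    by (intro antisym cInf_lower) (auto intro: cInf_greatest bdd_belowI[of _ 0])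
  then show ?thesis using False by (auto simp: infU_def)
qed

lemma supU_of_bool_image: "supU ((\<lambda>u. of_bool (P u)) ` S) = (of_bool (\<exists>u\<in>S. P u) :: real)"
proof (cases "\<exists>u\<in>S. P u")
  case False
  then have "(\<lambda>u. of_bool (P u) :: real) ` S \<subseteq> {0}" by auto
  then show ?thesis using False by (auto simp: supU_def subset_singleton_iff)
next
  case True
  then have "1 \<in> (\<lambda>u. of_bool (P u) :: real) ` S" by force
  moreover have "(\<lambda>u. of_bool (P u) :: real) ` S \<subseteq> {0, 1}" by auto
  ultimately have "Sup ((\<lambda>u. of_bool (P u) :: real) ` S) = 1"
    by (intro antisym cSup_upper) (auto intro: cSup_least bdd_aboveI[of _ 1])
  then show ?thesis using True by (auto simp: supU_def)
qed

lemma gimp_of_bool: "gimp (of_bool a) (of_bool b) = of_bool (a \<longrightarrow> b)"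
  by (auto simp: gimp_def)

lemma gcoimp_of_bool: "gcoimp (of_bool a) (of_bool b) = of_bool (a \<and> \<not> b)"
  by (auto simp: gcoimp_def)

lemma min_of_bool: "min (of_bool a) (of_bool b) = (of_bool (a \<and> b) :: real)"
  and max_of_bool: "max (of_bool a) (of_bool b) = (of_bool (a \<or> b) :: real)"
  by auto

text \<open>The library simp rules \<open>of_bool_or_iff\<close> and \<open>of_bool_conj\<close> orient the other way
  (towards max and products), so they are removed wherever these rules are used.\<close>

lemmas of_bool_connectives =
  gimp_of_bool gcoimp_of_bool min_of_bool max_of_bool infU_of_bool_image supU_of_bool_image

fun subst_atoms :: "(nat \<Rightarrow> gfm) \<Rightarrow> kfm \<Rightarrow> gfm" where
  "subst_atoms A (KVar p) = A p"
| "subst_atoms A KBot = GZero"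
| "subst_atoms A (KAnd a b) = GAnd (subst_atoms A a) (subst_atoms A b)"
| "subst_atoms A (KOr a b) = GOr (subst_atoms A a) (subst_atoms A b)"
| "subst_atoms A (KImp a b) = GImp (subst_atoms A a) (subst_atoms A b)"
| "subst_atoms A (KBox a) = GBox (subst_atoms A a)"
| "subst_atoms A (KDia a) = GDia (subst_atoms A a)"

definition gnot :: "gfm \<Rightarrow> gfm" where
  "gnot \<phi> = GImp \<phi> GZero"

definition dneg_atom :: "nat \<Rightarrow> gfm" where
  "dneg_atom p = gnot (gnot (GVar p))"

definition crisp_atom :: "nat \<Rightarrow> gfm" where
  "crisp_atom p = GAnd (dneg_atom p) (gnot (GNeg (dneg_atom p)))"

lemma neg_free_subst_dneg_atom: "neg_free (subst_atoms dneg_atom \<phi>)"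
  by (induction \<phi>) (auto simp: dneg_atom_def gnot_def)

lemma bival_dneg_atom: "bival F v u (dneg_atom p) = of_bool (0 < v p u)"
  by (simp add: dneg_atom_def gnot_def gimp_def)

lemma g2val_crisp_atom:
  "g2val F v1 v2 u (crisp_atom p)
     = (of_bool (0 < v1 p u \<and> v2 p u < 1), of_bool (\<not> (0 < v1 p u \<and> v2 p u < 1)))"
  by (auto simp: crisp_atom_def dneg_atom_def gnot_def gimp_def gcoimp_def)

lemma bival_subst_atoms:
  assumes "\<And>p u. bival F v u (A p) = of_bool (u \<in> V p)"
  shows "bival F v w (subst_atoms A \<phi>) = of_bool (ksat F V w \<phi>)"
  by (induction \<phi> arbitrary: w)
    (auto simp: assms of_bool_connectives simp del: of_bool_or_iff of_bool_conj)

lemma g2val_subst_atoms: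
  assumes "\<And>p u. g2val F v1 v2 u (A p) = (of_bool (u \<in> V p), of_bool (u \<notin> V p))"
  shows "g2val F v1 v2 w (subst_atoms A \<phi>) = (of_bool (ksat F V w \<phi>), of_bool (\<not> ksat F V w \<phi>))"
  by (induction \<phi> arbitrary: w)
    (auto simp: assms of_bool_connectives simp del: of_bool_or_iff of_bool_conj)

lemma biG_valid_subst_dneg_atom_iff:
  fixes F :: "'w frame"
  shows "biG_valid F (subst_atoms dneg_atom ` \<Sigma>) \<longleftrightarrow> k_valid F \<Sigma>"
proof
  assume valid: "biG_valid F (subst_atoms dneg_atom ` \<Sigma>)"
  show "k_valid F \<Sigma>" unfolding k_valid_def
  proof (intro allI ballI)
    fix V w \<phi> assume "w \<in> fst F" "\<phi> \<in> \<Sigma>"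
    define v :: "nat \<Rightarrow> 'w \<Rightarrow> real" where "v p u = of_bool (u \<in> V p)" for p u
    have "unit_val F v" by (simp add: unit_val_def v_def)
    with valid \<open>w \<in> fst F\<close> \<open>\<phi> \<in> \<Sigma>\<close> have "bival F v w (subst_atoms dneg_atom \<phi>) = 1"
      by (simp add: biG_valid_def)
    moreover have "bival F v w (subst_atoms dneg_atom \<phi>) = of_bool (ksat F V w \<phi>)"
      by (rule bival_subst_atoms) (simp add: bival_dneg_atom v_def)
    ultimately show "ksat F V w \<phi>" by simp
  qed
next
  assume "k_valid F \<Sigma>"
  show "biG_valid F (subst_atoms dneg_atom ` \<Sigma>)" unfolding biG_valid_def
  proof (intro allI impI ballI)
    fix v :: "nat \<Rightarrow> 'w \<Rightarrow> real" and w \<psi>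
    assume "w \<in> fst F" "\<psi> \<in> subst_atoms dneg_atom ` \<Sigma>"
    then obtain \<phi> where "\<phi> \<in> \<Sigma>" and \<psi>: "\<psi> = subst_atoms dneg_atom \<phi>" by blast
    define V where "V p = {u. 0 < v p u}" for p
    have "bival F v w \<psi> = of_bool (ksat F V w \<phi>)"
      unfolding \<psi> by (rule bival_subst_atoms) (simp add: bival_dneg_atom V_def)
    with \<open>k_valid F \<Sigma>\<close> \<open>w \<in> fst F\<close> \<open>\<phi> \<in> \<Sigma>\<close> show "bival F v w \<psi> = 1"
      by (simp add: k_valid_def)
  qed
qed

lemma G2_valid_subst_crisp_atom_iff:
  fixes F :: "'w frame"
  shows "G2_valid F (subst_atoms crisp_atom ` \<Sigma>) \<longleftrightarrow> k_valid F \<Sigma>"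
proof
  assume valid: "G2_valid F (subst_atoms crisp_atom ` \<Sigma>)"
  show "k_valid F \<Sigma>" unfolding k_valid_def
  proof (intro allI ballI)
    fix V w \<phi> assume "w \<in> fst F" "\<phi> \<in> \<Sigma>"
    define v :: "nat \<Rightarrow> 'w \<Rightarrow> real" where "v p u = of_bool (u \<in> V p)" for p u
    have "unit_val F v" "unit_val F (\<lambda>_ _. 0)" by (simp_all add: unit_val_def v_def)
    with valid \<open>w \<in> fst F\<close> \<open>\<phi> \<in> \<Sigma>\<close>
    have "g2val F v (\<lambda>_ _. 0) w (subst_atoms crisp_atom \<phi>) = (1, 0)"
      by (simp add: G2_valid_def)
    moreover have "g2val F v (\<lambda>_ _. 0) w (subst_atoms crisp_atom \<phi>)
        = (of_bool (ksat F V w \<phi>), of_bool (\<not> ksat F V w \<phi>))"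
      by (rule g2val_subst_atoms) (simp add: g2val_crisp_atom v_def)
    ultimately show "ksat F V w \<phi>" by simp
  qed
next
  assume "k_valid F \<Sigma>"
  show "G2_valid F (subst_atoms crisp_atom ` \<Sigma>)" unfolding G2_valid_def
  proof (intro allI impI ballI)
    fix v1 v2 :: "nat \<Rightarrow> 'w \<Rightarrow> real" and w \<psi>
    assume "w \<in> fst F" "\<psi> \<in> subst_atoms crisp_atom ` \<Sigma>"
    then obtain \<phi> where "\<phi> \<in> \<Sigma>" and \<psi>: "\<psi> = subst_atoms crisp_atom \<phi>" by blast
    define V where "V p = {u. 0 < v1 p u \<and> v2 p u < 1}" for p
    have "g2val F v1 v2 w \<psi> = (of_bool (ksat F V w \<phi>), of_bool (\<not> ksat F V w \<phi>))"
      unfolding \<psi> by (rule g2val_subst_atoms) (simp add: g2val_crisp_atom V_def)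
    with \<open>k_valid F \<Sigma>\<close> \<open>w \<in> fst F\<close> \<open>\<phi> \<in> \<Sigma>\<close> show "g2val F v1 v2 w \<psi> = (1, 0)"
      by (simp add: k_valid_def)
  qed
qed

theorem theorem1:
  fixes \<KK> :: "'w frame set"
  assumes "\<forall>F \<in> \<KK>. is_frame F"
    and "\<exists>\<Sigma>. K_defines \<Sigma> \<KK>"
  shows "(\<exists>\<Sigma>. biG_defines \<Sigma> \<KK>) \<and> (\<exists>\<Sigma>. G2_defines \<Sigma> \<KK>)"
proof -
  obtain \<Sigma> where "K_defines \<Sigma> \<KK>" using assms(2) by blast
  then have "biG_defines (subst_atoms dneg_atom ` \<Sigma>) \<KK>"
    and "G2_defines (subst_atoms crisp_atom ` \<Sigma>) \<KK>"
    by (auto simp: K_defines_def biG_defines_def G2_defines_def neg_free_subst_dneg_atom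
        biG_valid_subst_dneg_atom_iff G2_valid_subst_crisp_atom_iff)
  then show ?thesis by blast
qed

end
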